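(* Let $d\ge1$, $n\ge2$, and let $G$ be the $d$-dimensional grid graph with all side lengths equal to $n$ (vertex set $\{[x_1,\dots,x_d]\in\mathbb{Z}^d:1\le x_j\le n\}$, vertices adjacent iff they differ in exactly one coordinate by exactly $1$), with normalized Laplacian $\mathfrak{L}=D^{-1/2}(D-S)D^{-1/2}$. For each integer $z$ with $0\le z\le n-1$, the number $$\lambda_{[z]}=2\left(\cos\left(\frac{\pi z}{2(n-1)}\right)\right)^2$$ is an eigenvalue of $\mathfrak{L}$, with corresponding eigenvector $\mathbf{v}_{[z]}$ having components $$(\mathbf{v}_{[z]})_{[x_1,\dots,x_d]}=\sqrt{\deg([x_1,\dots,x_d])}\prod_{j=1}^d(-1)^{x_j}\cos\left(\frac{\pi z}{n-1}(x_j-1)\right),$$ where $\deg([x_1,\dots,x_d])=d+\#\{j: x_j\ne1\text{ and }x_j\ne n\}$ is the degree of the vertex.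
   Context: $S$ is the adjacency matrix and $D$ the diagonal degree matrix of the grid graph. *)

theory Defs
  imports Complex_Main
begin

text \<open>Vertices of the d-dimensional grid with side length n: integer vectors
  [x_1,...,x_d] (represented as lists of length d, x_j = x ! (j-1)) with 1 <= x_j <= n.\<close>
definition grid_vertices :: "nat \<Rightarrow> nat \<Rightarrow> int list set" where
  "grid_vertices d n = {x. length x = d \<and> (\<forall>j<d. 1 \<le> x ! j \<and> x ! j \<le> int n)}"

definition grid_adj :: "int list \<Rightarrow> int list \<Rightarrow> bool" where
  "grid_adj x y \<longleftrightarrow> length x = length y \<and>
     (\<exists>j<length x. \<bar>x ! j - y ! j\<bar> = 1 \<and> (\<forall>i<length x. i \<noteq> j \<longrightarrow> x ! i = y ! i))"

definition grid_S :: "nat \<Rightarrow> nat \<Rightarrow> int list \<Rightarrow> int list \<Rightarrow> real" where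
  "grid_S d n x y = (if x \<in> grid_vertices d n \<and> y \<in> grid_vertices d n \<and> grid_adj x y then 1 else 0)"

definition grid_deg :: "nat \<Rightarrow> nat \<Rightarrow> int list \<Rightarrow> nat" where
  "grid_deg d n x = card {y \<in> grid_vertices d n. grid_adj x y}"

definition grid_D :: "nat \<Rightarrow> nat \<Rightarrow> int list \<Rightarrow> int list \<Rightarrow> real" where
  "grid_D d n x y = (if x = y then real (grid_deg d n x) else 0)"

definition grid_normLap :: "nat \<Rightarrow> nat \<Rightarrow> int list \<Rightarrow> int list \<Rightarrow> real" where
  "grid_normLap d n x y =
     (1 / sqrt (real (grid_deg d n x))) * (grid_D d n x y - grid_S d n x y) * (1 / sqrt (real (grid_deg d n y)))"

definition is_eigenvector_on :: "'a set \<Rightarrow> ('a \<Rightarrow> 'a \<Rightarrow> real) \<Rightarrow> real \<Rightarrow> ('a \<Rightarrow> real) \<Rightarrow> bool" where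
  "is_eigenvector_on V M lam v \<longleftrightarrow>
     (\<exists>x\<in>V. v x \<noteq> 0) \<and> (\<forall>x\<in>V. (\<Sum>y\<in>V. M x y * v y) = lam * v x)"

definition is_eigenvalue_on :: "'a set \<Rightarrow> ('a \<Rightarrow> 'a \<Rightarrow> real) \<Rightarrow> real \<Rightarrow> bool" where
  "is_eigenvalue_on V M lam \<longleftrightarrow> (\<exists>v. is_eigenvector_on V M lam v)"

end

theory Submission imports Defs begin

text \<open>Along one coordinate, t \<mapsto> (-1)^t cos (\<theta>(t-1)) is an eigenfunction of the path
  adjacency with eigenvalue -2 cos \<theta> at inner points; the condition sin (\<theta>(n-1)) = 0, i.e.
  \<theta> = \<pi>z/(n-1), makes the two endpoints (which have only one neighbour) behave like
  reflecting boundaries, so the neighbour sum is -cos \<theta> times the local degree at every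
  point. The grid adjacency is the sum of these path adjacencies over all coordinates,
  so the product of the one-dimensional functions satisfies S w = -cos \<theta> D w, and
  D^(1/2) w is then an eigenvector of D^(-1/2)(D - S)D^(-1/2) for 1 + cos \<theta> = 2 cos(\<theta>/2)^2.\<close>

definition alt_cos :: "real \<Rightarrow> int \<Rightarrow> real" where
  "alt_cos \<theta> t = (-1) ^ nat t * cos (\<theta> * (real_of_int t - 1))"

definition path_steps :: "nat \<Rightarrow> int \<Rightarrow> int set" where
  "path_steps n t = {s \<in> {-1, 1}. 1 \<le> t + s \<and> t + s \<le> int n}"

lemma finite_path_steps: "finite (path_steps n t)"
  by (simp add: path_steps_def)

lemma minus_one_power_nat_succ: "0 \<le> t \<Longrightarrow> (-1::real) ^ nat (t + 1) = - ((-1) ^ nat t)"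
  by (simp add: nat_add_distrib)

lemma minus_one_power_nat_pred: "1 \<le> t \<Longrightarrow> (-1::real) ^ nat (t - 1) = - ((-1) ^ nat t)"
proof -
  assume "1 \<le> t"
  then have "nat t = Suc (nat (t - 1))" by linarith
  then show ?thesis by simp
qed

lemma alt_cos_succ:
  assumes "0 \<le> t"
  shows "alt_cos \<theta> (t + 1) = - ((-1) ^ nat t * cos (\<theta> * (real_of_int t - 1) + \<theta>))"
proof -
  have "\<theta> * (real_of_int (t + 1) - 1) = \<theta> * (real_of_int t - 1) + \<theta>"
    by (simp add: algebra_simps)
  then show ?thesis unfolding alt_cos_def minus_one_power_nat_succ[OF assms] by simp
qed

lemma alt_cos_pred:
  assumes "1 \<le> t"
  shows "alt_cos \<theta> (t - 1) = - ((-1) ^ nat t * cos (\<theta> * (real_of_int t - 1) - \<theta>))"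
proof -
  have "\<theta> * (real_of_int (t - 1) - 1) = \<theta> * (real_of_int t - 1) - \<theta>"
    by (simp add: algebra_simps)
  then show ?thesis unfolding alt_cos_def minus_one_power_nat_pred[OF assms] by simp
qed

lemma sum_path_steps_alt_cos:
  assumes "1 \<le> t" "t \<le> int n" "n \<ge> 2" and resonant: "sin (\<theta> * (real n - 1)) = 0"
  shows "(\<Sum>s\<in>path_steps n t. alt_cos \<theta> (t + s))
           = - cos \<theta> * real (card (path_steps n t)) * alt_cos \<theta> t"
proof -
  define A where "A = \<theta> * (real_of_int t - 1)"
  have at_t: "alt_cos \<theta> t = (-1) ^ nat t * cos A" by (simp add: alt_cos_def A_def)
  have pred: "alt_cos \<theta> (t - 1) = - ((-1) ^ nat t * cos (A - \<theta>))"
    unfolding A_def using assms(1) by (rule alt_cos_pred)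
  have succ: "alt_cos \<theta> (t + 1) = - ((-1) ^ nat t * cos (A + \<theta>))"
    unfolding A_def using assms(1) by (intro alt_cos_succ) simp
  consider "t = 1" | "t = int n" | "1 < t \<and> t < int n" using assms by linarith
  then show ?thesis
  proof cases
    case 1
    then have "path_steps n t = {1}" using assms by (auto simp: path_steps_def)
    then show ?thesis using 1 by (simp add: alt_cos_def)
  next
    case 2
    then have "path_steps n t = {-1}" using assms by (auto simp: path_steps_def)
    moreover have "sin A = 0" using 2 resonant by (simp add: A_def)
    ultimately show ?thesis by (simp add: pred at_t cos_diff)
  next
    case 3
    then have "path_steps n t = {-1, 1}" using assms by (auto simp: path_steps_def)
    then have "(\<Sum>s\<in>path_steps n t. alt_cos \<theta> (t + s)) = alt_cos \<theta> (t - 1) + alt_cos \<theta> (t + 1)"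
      by simp
    also have "\<dots> = - cos \<theta> * 2 * alt_cos \<theta> t"
      unfolding pred succ at_t by (simp add: cos_diff cos_add algebra_simps)
    finally show ?thesis using \<open>path_steps n t = {-1, 1}\<close> by simp
  qed
qed

definition grid_move :: "int list \<Rightarrow> nat \<times> int \<Rightarrow> int list" where
  "grid_move x p = x[fst p := x ! fst p + snd p]"

definition grid_moves :: "nat \<Rightarrow> nat \<Rightarrow> int list \<Rightarrow> (nat \<times> int) set" where
  "grid_moves d n x = (SIGMA j:{..<d}. path_steps n (x ! j))"

lemma finite_grid_moves: "finite (grid_moves d n x)"
  by (simp add: grid_moves_def finite_path_steps)

lemma card_grid_moves: "card (grid_moves d n x) = (\<Sum>j<d. card (path_steps n (x ! j)))"
  by (simp add: grid_moves_def card_SigmaI finite_path_steps)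

lemma finite_grid_vertices: "finite (grid_vertices d n)"
proof (rule finite_subset)
  show "grid_vertices d n \<subseteq> {xs. set xs \<subseteq> {1..int n} \<and> length xs = d}"
    by (auto simp: grid_vertices_def in_set_conv_nth)
  show "finite {xs. set xs \<subseteq> {1..int n} \<and> length xs = d}"
    by (rule finite_lists_length_eq) simp
qed

lemma grid_neighbours_eq_image:
  assumes x: "x \<in> grid_vertices d n"
  shows "{y \<in> grid_vertices d n. grid_adj x y} = grid_move x ` grid_moves d n x"
proof (intro equalityI subsetI)
  have lx: "length x = d" using x by (simp add: grid_vertices_def)
  fix y assume "y \<in> {y \<in> grid_vertices d n. grid_adj x y}"
  then have yV: "y \<in> grid_vertices d n" and "grid_adj x y" by auto
  then obtain j where j: "j < d" "\<bar>x ! j - y ! j\<bar> = 1" "\<forall>i<d. i \<noteq> j \<longrightarrow> x ! i = y ! i"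
    and ly: "length y = d"
    using lx unfolding grid_adj_def by auto
  define s where "s = y ! j - x ! j"
  have "s \<in> {-1, 1}" using j(2) by (auto simp: s_def)
  have "y = grid_move x (j, s)"
    by (rule nth_equalityI) (use lx ly j s_def in \<open>auto simp: grid_move_def nth_list_update\<close>)
  moreover have "(j, s) \<in> grid_moves d n x"
    using j(1) yV \<open>s \<in> {-1, 1}\<close> by (simp add: grid_moves_def path_steps_def grid_vertices_def s_def)
  ultimately show "y \<in> grid_move x ` grid_moves d n x" by blast
next
  have lx: "length x = d" using x by (simp add: grid_vertices_def)
  fix y assume "y \<in> grid_move x ` grid_moves d n x"
  then obtain j s where j: "j < d" and s: "s \<in> {-1, 1}" "1 \<le> x ! j + s" "x ! j + s \<le> int n"
    and y: "y = grid_move x (j, s)"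
    by (auto simp: grid_moves_def path_steps_def)
  have "y \<in> grid_vertices d n"
    using x j s unfolding y grid_move_def grid_vertices_def by (auto simp: nth_list_update)
  moreover have "grid_adj x y"
    unfolding grid_adj_def y grid_move_def using lx j s(1)
    by (intro conjI exI[of _ j]) (auto simp: nth_list_update)
  ultimately show "y \<in> {y \<in> grid_vertices d n. grid_adj x y}" by blast
qed

lemma inj_on_grid_move:
  assumes "length x = d"
  shows "inj_on (grid_move x) (grid_moves d n x)"
proof
  fix p q assume "p \<in> grid_moves d n x" "q \<in> grid_moves d n x" and eq: "grid_move x p = grid_move x q"
  then obtain j s k r where p: "p = (j, s)" "j < d" "s \<in> {-1, 1}"
    and q: "q = (k, r)" "k < d" "r \<in> {-1, 1}"
    by (auto simp: grid_moves_def path_steps_def)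
  have "grid_move x p ! j = grid_move x q ! j" using eq by simp
  then show "p = q"
    using p q assms by (cases "j = k") (auto simp: grid_move_def nth_list_update)
qed

lemma grid_deg_eq_card_moves:
  assumes "x \<in> grid_vertices d n"
  shows "grid_deg d n x = card (grid_moves d n x)"
  unfolding grid_deg_def grid_neighbours_eq_image[OF assms]
  by (rule card_image, rule inj_on_grid_move) (use assms in \<open>simp add: grid_vertices_def\<close>)

lemma sum_grid_neighbours:
  assumes "x \<in> grid_vertices d n"
  shows "(\<Sum>y\<in>{y \<in> grid_vertices d n. grid_adj x y}. f y) = (\<Sum>p\<in>grid_moves d n x. f (grid_move x p))"
  unfolding grid_neighbours_eq_image[OF assms]
  by (rule sum.reindex[unfolded comp_def], rule inj_on_grid_move)
     (use assms in \<open>simp add: grid_vertices_def\<close>)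

lemma grid_deg_pos:
  assumes "x \<in> grid_vertices d n" "d \<ge> 1" "n \<ge> 2"
  shows "grid_deg d n x > 0"
proof -
  have "1 \<le> x ! 0" "x ! 0 \<le> int n" using assms unfolding grid_vertices_def by auto
  then have "(0, if x ! 0 = 1 then 1 else -1) \<in> grid_moves d n x"
    using assms(2,3) by (auto simp: grid_moves_def path_steps_def)
  then show ?thesis
    using grid_deg_eq_card_moves[OF assms(1)] finite_grid_moves by (auto simp: card_gt_0_iff)
qed

definition grid_wave :: "real \<Rightarrow> nat \<Rightarrow> int list \<Rightarrow> real" where
  "grid_wave \<theta> d x = (\<Prod>j<d. alt_cos \<theta> (x ! j))"

lemma grid_wave_update:
  assumes "j < d" "length x = d"
  shows "grid_wave \<theta> d (x[j := t]) = alt_cos \<theta> t * (\<Prod>i\<in>{..<d} - {j}. alt_cos \<theta> (x ! i))"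
proof -
  have "(\<Prod>i\<in>{..<d} - {j}. alt_cos \<theta> (x[j := t] ! i)) = (\<Prod>i\<in>{..<d} - {j}. alt_cos \<theta> (x ! i))"
    by (rule prod.cong) auto
  then show ?thesis
    using assms by (simp add: grid_wave_def prod.remove[of "{..<d}" j])
qed

lemma sum_grid_moves_grid_wave:
  assumes x: "x \<in> grid_vertices d n" and "n \<ge> 2" "sin (\<theta> * (real n - 1)) = 0"
  shows "(\<Sum>p\<in>grid_moves d n x. grid_wave \<theta> d (grid_move x p))
           = - cos \<theta> * real (card (grid_moves d n x)) * grid_wave \<theta> d x"
proof -
  have lx: "length x = d" using x by (simp add: grid_vertices_def)
  define R where "R j = (\<Prod>i\<in>{..<d} - {j}. alt_cos \<theta> (x ! i))" for j
  have along_j: "(\<Sum>s\<in>path_steps n (x ! j). grid_wave \<theta> d (grid_move x (j, s)))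
      = - cos \<theta> * real (card (path_steps n (x ! j))) * grid_wave \<theta> d x" if j: "j < d" for j
  proof -
    have "1 \<le> x ! j" "x ! j \<le> int n" using x j by (auto simp: grid_vertices_def)
    note path = sum_path_steps_alt_cos[OF this assms(2,3)]
    have "(\<Sum>s\<in>path_steps n (x ! j). grid_wave \<theta> d (grid_move x (j, s)))
        = R j * (\<Sum>s\<in>path_steps n (x ! j). alt_cos \<theta> (x ! j + s))"
      by (simp add: grid_move_def grid_wave_update j lx R_def sum_distrib_left mult.commute)
    also have "grid_wave \<theta> d x = alt_cos \<theta> (x ! j) * R j"
      using grid_wave_update[OF j lx, of \<theta> "x ! j"] by (simp add: R_def)
    ultimately show ?thesis by (simp add: path)
  qed
  have "(\<Sum>p\<in>grid_moves d n x. grid_wave \<theta> d (grid_move x p))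
      = (\<Sum>j<d. \<Sum>s\<in>path_steps n (x ! j). grid_wave \<theta> d (grid_move x (j, s)))"
    by (simp add: grid_moves_def sum.Sigma finite_path_steps)
  also have "\<dots> = (\<Sum>j<d. - cos \<theta> * real (card (path_steps n (x ! j))) * grid_wave \<theta> d x)"
    by (simp add: along_j)
  finally show ?thesis
    by (simp add: card_grid_moves sum_distrib_left sum_distrib_right)
qed

lemma sum_grid_neighbours_grid_wave:
  assumes "x \<in> grid_vertices d n" "n \<ge> 2" "sin (\<theta> * (real n - 1)) = 0"
  shows "(\<Sum>y\<in>{y \<in> grid_vertices d n. grid_adj x y}. grid_wave \<theta> d y)
           = - cos \<theta> * real (grid_deg d n x) * grid_wave \<theta> d x"
  using sum_grid_moves_grid_wave[OF assms]
  by (simp add: sum_grid_neighbours[OF assms(1)] grid_deg_eq_card_moves[OF assms(1)])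

lemma grid_normLap_sqrt_deg_apply:
  assumes x: "x \<in> grid_vertices d n" and "d \<ge> 1" "n \<ge> 2"
  shows "(\<Sum>y\<in>grid_vertices d n. grid_normLap d n x y * (sqrt (real (grid_deg d n y)) * w y))
       = (real (grid_deg d n x) * w x - (\<Sum>y\<in>{y \<in> grid_vertices d n. grid_adj x y}. w y))
           / sqrt (real (grid_deg d n x))"
proof -
  let ?V = "grid_vertices d n"
  have "grid_normLap d n x y * (sqrt (real (grid_deg d n y)) * w y)
      = (grid_D d n x y * w y - grid_S d n x y * w y) / sqrt (real (grid_deg d n x))"
    if "y \<in> ?V" for y
    using grid_deg_pos[OF that assms(2,3)]
    by (simp add: grid_normLap_def diff_divide_distrib algebra_simps)
  then have "(\<Sum>y\<in>?V. grid_normLap d n x y * (sqrt (real (grid_deg d n y)) * w y))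
      = ((\<Sum>y\<in>?V. grid_D d n x y * w y) - (\<Sum>y\<in>?V. grid_S d n x y * w y))
          / sqrt (real (grid_deg d n x))"
    by (simp add: sum_subtractf flip: sum_divide_distrib)
  also have "(\<Sum>y\<in>?V. grid_D d n x y * w y)
      = (\<Sum>y\<in>?V. if x = y then real (grid_deg d n x) * w y else 0)"
    by (rule sum.cong) (simp_all add: grid_D_def)
  also have "\<dots> = real (grid_deg d n x) * w x"
    using x finite_grid_vertices by simp
  also have "(\<Sum>y\<in>?V. grid_S d n x y * w y) = (\<Sum>y\<in>?V. if grid_adj x y then w y else 0)"
    by (rule sum.cong) (use x in \<open>simp_all add: grid_S_def\<close>)
  also have "\<dots> = (\<Sum>y\<in>{y \<in> ?V. grid_adj x y}. w y)"
    using finite_grid_vertices by (simp add: sum.inter_filter)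
  finally show ?thesis .
qed

lemma grid_normLap_eigen_of_adjacency_eigen:
  assumes "d \<ge> 1" "n \<ge> 2"
    and adj: "\<And>x. x \<in> grid_vertices d n \<Longrightarrow>
      (\<Sum>y\<in>{y \<in> grid_vertices d n. grid_adj x y}. w y) = \<mu> * real (grid_deg d n x) * w x"
    and x: "x \<in> grid_vertices d n"
  shows "(\<Sum>y\<in>grid_vertices d n. grid_normLap d n x y * (sqrt (real (grid_deg d n y)) * w y))
       = (1 - \<mu>) * (sqrt (real (grid_deg d n x)) * w x)"
proof -
  define \<delta> where "\<delta> = real (grid_deg d n x)"
  have "\<delta> > 0" using grid_deg_pos[OF x assms(1,2)] by (simp add: \<delta>_def)
  have "(\<delta> * w x - \<mu> * \<delta> * w x) / sqrt \<delta> = (1 - \<mu>) * (\<delta> / sqrt \<delta> * w x)"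
    by (simp add: algebra_simps)
  also have "\<delta> / sqrt \<delta> = sqrt \<delta>" by (rule real_div_sqrt) (use \<open>\<delta> > 0\<close> in simp)
  finally have "(\<delta> * w x - \<mu> * \<delta> * w x) / sqrt \<delta> = (1 - \<mu>) * (sqrt \<delta> * w x)" .
  then show ?thesis
    by (simp add: grid_normLap_sqrt_deg_apply[OF x assms(1,2)] adj[OF x] flip: \<delta>_def)
qed

lemma two_cos_half_squared: "2 * (cos ((\<theta>::real) / 2))\<^sup>2 = 1 + cos \<theta>"
  using cos_double[of "\<theta> / 2"] by (simp add: cos_squared_eq)

theorem mainTheorem9:
  fixes d n z :: nat
  assumes "d \<ge> 1" and "n \<ge> 2" and "z \<le> n - 1"
  shows "is_eigenvalue_on (grid_vertices d n) (grid_normLap d n)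
           (2 * (cos (pi * real z / (2 * (real n - 1))))\<^sup>2)
       \<and> is_eigenvector_on (grid_vertices d n) (grid_normLap d n)
           (2 * (cos (pi * real z / (2 * (real n - 1))))\<^sup>2)
           (\<lambda>x. sqrt (real (grid_deg d n x)) *
                 (\<Prod>j<d. (-1::real) ^ nat (x ! j) *
                          cos (pi * real z / (real n - 1) * (real_of_int (x ! j) - 1))))"
proof -
  define \<theta> where "\<theta> = pi * real z / (real n - 1)"
  have resonant: "sin (\<theta> * (real n - 1)) = 0"
    using assms(2) by (simp add: \<theta>_def sin_npi mult.commute)
  have half: "pi * real z / (2 * (real n - 1)) = \<theta> / 2" by (simp add: \<theta>_def)
  have \<lambda>: "2 * (cos (pi * real z / (2 * (real n - 1))))\<^sup>2 = 1 - (- cos \<theta>)"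
    by (simp only: half two_cos_half_squared diff_minus_eq_add)
  let ?v = "\<lambda>x. sqrt (real (grid_deg d n x)) * grid_wave \<theta> d x"
  define x\<^sub>0 where "x\<^sub>0 = replicate d (1::int)"
  have x\<^sub>0: "x\<^sub>0 \<in> grid_vertices d n" using assms(2) by (simp add: x\<^sub>0_def grid_vertices_def)
  have "grid_wave \<theta> d x\<^sub>0 = (-1) ^ d" by (simp add: grid_wave_def alt_cos_def x\<^sub>0_def)
  then have "?v x\<^sub>0 \<noteq> 0" using grid_deg_pos[OF x\<^sub>0 assms(1,2)] by simp
  moreover note grid_normLap_eigen_of_adjacency_eigen[OF assms(1,2)
      sum_grid_neighbours_grid_wave[OF _ assms(2) resonant]]
  ultimately have "is_eigenvector_on (grid_vertices d n) (grid_normLap d n) (1 - (- cos \<theta>)) ?v"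
    using x\<^sub>0 unfolding is_eigenvector_on_def by blast
  then show ?thesis
    unfolding \<lambda> is_eigenvalue_on_def by (auto simp: grid_wave_def alt_cos_def \<theta>_def)
qed

end
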